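(* With the notation of the context, if $r=\min_h d_h=2$, then the asymptotic threshold satisfies $$G^*(\mathcal C,\boldsymbol\Lambda)\le\frac{k}{2\mathcal B_2},\qquad \mathcal B_2=\sum_{h:\,d_h=2}\Lambda_hB^{(h)}_2,$$ where $B^{(h)}_2$ is the number of weight-2 codewords of $\mathscr C_h$. In particular, for IRSA ($k=1$, $\mathscr C_h$ the length-$h$ repetition code) $G^*(\mathcal C,\boldsymbol\Lambda)\le 1/(2\Lambda_2)$.
   Context: For $h=1,\dots,\theta$, $\mathscr C_h$ is an $(n_h,k)$ binary linear code with minimum distance $d_h\ge2$ and no idle symbols, chosen with probability $\Lambda_h$; $\bar n=\sum_h\Lambda_hn_h$, $R=k/\bar n$. Un-normalized information function $\tilde e^{(h)}_g$: sum over all $g$-subsets of columns of a generator matrix of $\mathscr C_h$ of the rank of the corresponding submatrix ($\tilde e_0=0$). For $G\ge0$ define the recursion $p_\ell=1-\exp\{-\frac{G}{k}\sum_h\Lambda_h\sum_{t=0}^{n_h-1}p_{\ell-1}^t(1-p_{\ell-1})^{n_h-1-t}[(n_h-t)\tilde e^{(h)}_{n_h-t}-(t+1)\tilde e^{(h)}_{n_h-1-t}]\}$, $p_0=1-e^{-G/R}$. The asymptotic threshold is $G^*(\mathcal C,\boldsymbol\Lambda)=\sup\{G\ge0: p_\ell\to0\text{ as }\ell\to\infty\}$. *)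

theory Defs
  imports Complex_Main
begin

text \<open>Binary linear codes are given by a generator matrix over GF(2), represented as a
  Boolean function g :: nat => nat => bool, where g i j is the entry in row i (i < k) and
  column j (j < n).  Addition in GF(2) is XOR, so a GF(2)-sum of bits is the parity of the
  number of ones.\<close>

definition gf2_sum :: "nat set \<Rightarrow> (nat \<Rightarrow> bool) \<Rightarrow> bool" where
  "gf2_sum S f = odd (card {i \<in> S. f i})"

definition codeword :: "nat \<Rightarrow> (nat \<Rightarrow> nat \<Rightarrow> bool) \<Rightarrow> nat set \<Rightarrow> (nat \<Rightarrow> bool)" where
  "codeword n g S = (\<lambda>j. j < n \<and> gf2_sum S (\<lambda>i. g i j))"

definition code :: "nat \<Rightarrow> nat \<Rightarrow> (nat \<Rightarrow> nat \<Rightarrow> bool) \<Rightarrow> (nat \<Rightarrow> bool) set" where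
  "code n k g = {codeword n g S | S. S \<subseteq> {..<k}}"

definition hweight :: "nat \<Rightarrow> (nat \<Rightarrow> bool) \<Rightarrow> nat" where
  "hweight n c = card {j. j < n \<and> c j}"

definition is_generator :: "nat \<Rightarrow> nat \<Rightarrow> (nat \<Rightarrow> nat \<Rightarrow> bool) \<Rightarrow> bool" where
  "is_generator n k g \<longleftrightarrow>
     (\<forall>S. S \<subseteq> {..<k} \<and> S \<noteq> {} \<longrightarrow> (\<exists>j<n. gf2_sum S (\<lambda>i. g i j)))"

definition no_idle :: "nat \<Rightarrow> nat \<Rightarrow> (nat \<Rightarrow> nat \<Rightarrow> bool) \<Rightarrow> bool" where
  "no_idle n k g \<longleftrightarrow> (\<forall>j<n. \<exists>i<k. g i j)"

definition min_dist :: "nat \<Rightarrow> nat \<Rightarrow> (nat \<Rightarrow> nat \<Rightarrow> bool) \<Rightarrow> nat" where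
  "min_dist n k g = Min {hweight n c | c. c \<in> code n k g \<and> c \<noteq> (\<lambda>_. False)}"

definition B2 :: "nat \<Rightarrow> nat \<Rightarrow> (nat \<Rightarrow> nat \<Rightarrow> bool) \<Rightarrow> nat" where
  "B2 n k g = card {c \<in> code n k g. hweight n c = 2}"

definition cols_indep :: "nat \<Rightarrow> (nat \<Rightarrow> nat \<Rightarrow> bool) \<Rightarrow> nat set \<Rightarrow> bool" where
  "cols_indep k g T \<longleftrightarrow>
     (\<forall>T'. T' \<subseteq> T \<and> T' \<noteq> {} \<longrightarrow> (\<exists>i<k. gf2_sum T' (\<lambda>j. g i j)))"

definition col_rank :: "nat \<Rightarrow> (nat \<Rightarrow> nat \<Rightarrow> bool) \<Rightarrow> nat set \<Rightarrow> nat" where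
  "col_rank k g A = Max {card T | T. T \<subseteq> A \<and> cols_indep k g T}"

text \<open>Un-normalized information function: sum over all m-subsets of the n columns of the
  rank of the corresponding submatrix.\<close>
definition info_fun :: "nat \<Rightarrow> nat \<Rightarrow> (nat \<Rightarrow> nat \<Rightarrow> bool) \<Rightarrow> nat \<Rightarrow> real" where
  "info_fun n k g m = (\<Sum>A | A \<subseteq> {..<n} \<and> card A = m. real (col_rank k g A))"

text \<open>Codes indexed by a finite index set H: code h has length nn h, generator gen h,
  probability Lam h; all have dimension k.\<close>
definition avg_len :: "nat set \<Rightarrow> (nat \<Rightarrow> real) \<Rightarrow> (nat \<Rightarrow> nat) \<Rightarrow> real" where
  "avg_len H Lam nn = (\<Sum>h\<in>H. Lam h * real (nn h))"

definition rate :: "nat set \<Rightarrow> (nat \<Rightarrow> real) \<Rightarrow> (nat \<Rightarrow> nat) \<Rightarrow> nat \<Rightarrow> real" where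
  "rate H Lam nn k = real k / avg_len H Lam nn"

primrec pseq :: "nat set \<Rightarrow> (nat \<Rightarrow> real) \<Rightarrow> (nat \<Rightarrow> nat) \<Rightarrow> (nat \<Rightarrow> nat \<Rightarrow> nat \<Rightarrow> bool)
    \<Rightarrow> nat \<Rightarrow> real \<Rightarrow> nat \<Rightarrow> real" where
  "pseq H Lam nn gen k G 0 = 1 - exp (- G / rate H Lam nn k)"
| "pseq H Lam nn gen k G (Suc l) =
     (let p = pseq H Lam nn gen k G l in
      1 - exp (- (G / real k) *
        (\<Sum>h\<in>H. Lam h *
          (\<Sum>t<nn h. p ^ t * (1 - p) ^ (nn h - 1 - t) *
             (real (nn h - t) * info_fun (nn h) k (gen h) (nn h - t)
              - real (t + 1) * info_fun (nn h) k (gen h) (nn h - 1 - t))))))"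

definition threshold :: "nat set \<Rightarrow> (nat \<Rightarrow> real) \<Rightarrow> (nat \<Rightarrow> nat) \<Rightarrow> (nat \<Rightarrow> nat \<Rightarrow> nat \<Rightarrow> bool)
    \<Rightarrow> nat \<Rightarrow> real" where
  "threshold H Lam nn gen k = Sup {G. G \<ge> 0 \<and> pseq H Lam nn gen k G \<longlonglongrightarrow> 0}"

end

theory Submission
  imports Defs
begin

text \<open>Write the recursion as p(l+1) = 1 - exp (-(G/k) \<phi>(p(l))) with
  \<phi>(p) = \<Sum>h \<Lambda>h \<Sum>t p^t (1-p)^(n_h-1-t) c_h(t),
  where c_h(t) = (n_h-t) e(n_h-t) - (t+1) e(n_h-1-t).
  Double counting shows that c_h(t) is the sum, over columns j and (n_h-t)-sets A containing j,
  of the rank drops rank A - rank (A - {j}); in particular c_h(t) \<ge> 0.  For t = 1 the sets A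
  are the complements of single columns i, and a weight-2 codeword supported on {i, j} makes
  column j independent of the remaining columns of A, so each ordered pair (j, i) of its
  support contributes a rank drop of at least one: c_h(1) \<ge> 2 B2_h.
  Hence \<phi>(p) \<ge> 2 \<B> p (1-p)^N with \<B> = \<Sum>h \<Lambda>h B2_h \<ge> \<B>_2.  If G > k/(2\<B>), the map
  p \<mapsto> 1 - exp (-(G/k) \<phi>(p)) has slope larger than one at 0; the sequence stays in (0,1)
  and increases whenever it is small, so it cannot tend to 0.\<close>

definition info_coeff :: "nat \<Rightarrow> nat \<Rightarrow> (nat \<Rightarrow> nat \<Rightarrow> bool) \<Rightarrow> nat \<Rightarrow> real" where
  "info_coeff n k g t =
     real (n - t) * info_fun n k g (n - t) - real (t + 1) * info_fun n k g (n - 1 - t)"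

definition evolution_poly ::
    "nat set \<Rightarrow> (nat \<Rightarrow> real) \<Rightarrow> (nat \<Rightarrow> nat) \<Rightarrow> (nat \<Rightarrow> nat \<Rightarrow> nat \<Rightarrow> bool) \<Rightarrow> nat \<Rightarrow> real \<Rightarrow> real" where
  "evolution_poly H Lam nn gen k p =
     (\<Sum>h\<in>H. Lam h * (\<Sum>t<nn h. p ^ t * (1 - p) ^ (nn h - 1 - t) * info_coeff (nn h) k (gen h) t))"

lemma pseq_Suc:
  "pseq H Lam nn gen k G (Suc l)
     = 1 - exp (- (G / real k) * evolution_poly H Lam nn gen k (pseq H Lam nn gen k G l))"
  by (simp add: Let_def evolution_poly_def info_coeff_def)

lemma gf2_sum_singleton [simp]: "gf2_sum {i} f \<longleftrightarrow> f i"
proof -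
  have "{r\<in>{i}. f r} = (if f i then {i} else {})"
    by auto
  then show ?thesis
    by (simp add: gf2_sum_def)
qed

lemma even_card_gf2_sum_swap:
  assumes "finite S" "finite T"
  shows "even (card {i\<in>S. gf2_sum T (P i)}) \<longleftrightarrow> even (card {x\<in>T. gf2_sum S (\<lambda>i. P i x)})"
proof -
  have card_eq: "card {x\<in>A. Q x} = (\<Sum>x\<in>A. of_bool (Q x) :: nat)" if "finite A" for A Q
    using that by (simp add: Int_def conj_commute)
  have "(\<Sum>i\<in>S. card {x\<in>T. P i x}) = (\<Sum>x\<in>T. card {i\<in>S. P i x})"
    using assms by (simp only: card_eq) (rule sum.swap)
  then have "even (\<Sum>i\<in>S. card {x\<in>T. P i x}) \<longleftrightarrow> even (\<Sum>x\<in>T. card {i\<in>S. P i x})"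
    by simp
  then show ?thesis
    by (simp only: even_sum_iff[OF assms(1)] even_sum_iff[OF assms(2)] gf2_sum_def)
qed

lemma is_generator_row_nonzero:
  assumes "is_generator n k g" "i < k"
  obtains j where "j < n" "g i j"
proof -
  have "{i} \<subseteq> {..<k} \<and> {i} \<noteq> {}"
    using assms(2) by simp
  then obtain j where "j < n" "gf2_sum {i} (\<lambda>r. g r j)"
    using assms(1) unfolding is_generator_def by blast
  then show ?thesis
    using that by simp
qed

lemma finite_code: "finite (code n k g)"
  unfolding code_def by (rule finite_subset[of _ "codeword n g ` Pow {..<k}"]) auto

lemma code_support_less: "c \<in> code n k g \<Longrightarrow> c x \<Longrightarrow> x < n"
  by (auto simp: code_def codeword_def)

lemma col_rank_attained:
  assumes "finite A"
  shows "\<exists>T. T \<subseteq> A \<and> cols_indep k g T \<and> col_rank k g A = card T"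
    and "T \<subseteq> A \<Longrightarrow> cols_indep k g T \<Longrightarrow> card T \<le> col_rank k g A"
proof -
  have fin: "finite {card T | T. T \<subseteq> A \<and> cols_indep k g T}"
    by (rule finite_subset[of _ "card ` Pow A"]) (auto simp: assms)
  have "{} \<subseteq> A \<and> cols_indep k g {}"
    by (simp add: cols_indep_def)
  then have ne: "{card T | T. T \<subseteq> A \<and> cols_indep k g T} \<noteq> {}"
    by blast
  show "\<exists>T. T \<subseteq> A \<and> cols_indep k g T \<and> col_rank k g A = card T"
    using Max_in[OF fin ne] unfolding col_rank_def by auto
  show "T \<subseteq> A \<Longrightarrow> cols_indep k g T \<Longrightarrow> card T \<le> col_rank k g A"
    unfolding col_rank_def using Max_ge[OF fin] by blast
qed

lemma col_rank_mono: "finite A \<Longrightarrow> B \<subseteq> A \<Longrightarrow> col_rank k g B \<le> col_rank k g A"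
  by (metis col_rank_attained finite_subset order_trans)

lemma cols_indep_insert_weight2:
  assumes ind: "cols_indep k g T" and T: "T \<subseteq> {..<n} - {i, j}" and S: "S \<subseteq> {..<k}"
    and support: "\<And>x. x < n \<Longrightarrow> codeword n g S x \<longleftrightarrow> x = i \<or> x = j"
    and j: "j < n"
  shows "cols_indep k g (insert j T)"
  unfolding cols_indep_def
proof (intro allI impI)
  fix T' assume T': "T' \<subseteq> insert j T \<and> T' \<noteq> {}"
  show "\<exists>r<k. gf2_sum T' (\<lambda>x. g r x)"
  proof (cases "j \<in> T'")
    case False
    then show ?thesis
      using ind T' unfolding cols_indep_def by blast
  next
    case True
    txt \<open>Counting the ones of the S \<times> T' submatrix by rows and by columns: only column j
      has odd weight (it is the only column of T' in the support of the codeword), so some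
      row in S has odd weight on T'.\<close>
    have "T' \<subseteq> {..<n}"
      using T' T j by auto
    then have fin: "finite S" "finite T'"
      using S by (auto intro: finite_subset)
    have "{x\<in>T'. gf2_sum S (\<lambda>r. g r x)} = {j}"
      using True T' T j support by (auto simp: codeword_def)
    then have "odd (card {r\<in>S. gf2_sum T' (\<lambda>x. g r x)})"
      using even_card_gf2_sum_swap[OF fin, of g] by simp
    then have "{r\<in>S. gf2_sum T' (\<lambda>x. g r x)} \<noteq> {}"
      by (intro notI) simp
    then show ?thesis
      using S by blast
  qed
qed

lemma col_rank_Diff_weight2_less:
  assumes S: "S \<subseteq> {..<k}" and support: "\<And>x. x < n \<Longrightarrow> codeword n g S x \<longleftrightarrow> x = i \<or> x = j"
    and j: "j < n" and ij: "i \<noteq> j"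
  shows "col_rank k g ({..<n} - {i} - {j}) < col_rank k g ({..<n} - {i})"
proof -
  obtain T where T: "T \<subseteq> {..<n} - {i} - {j}" "cols_indep k g T"
      "col_rank k g ({..<n} - {i} - {j}) = card T"
    using col_rank_attained(1)[of "{..<n} - {i} - {j}" k g] by blast
  have "cols_indep k g (insert j T)"
    by (rule cols_indep_insert_weight2[OF T(2) _ S support j]) (use T(1) in blast)
  moreover have "insert j T \<subseteq> {..<n} - {i}"
    using T(1) j ij by blast
  ultimately have "card (insert j T) \<le> col_rank k g ({..<n} - {i})"
    using col_rank_attained(2)[of "{..<n} - {i}" "insert j T" k g] by simp
  moreover have "finite T" "j \<notin> T"
    using T(1) finite_subset by blast+
  then have "card (insert j T) = Suc (card T)"
    by simp
  ultimately show ?thesis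
    using T(3) by simp
qed

lemma sum_subsets_times_card:
  fixes f :: "'a set \<Rightarrow> real"
  assumes U: "finite U"
  shows "real m * (\<Sum>A | A \<subseteq> U \<and> card A = m. f A)
           = (\<Sum>j\<in>U. \<Sum>A | A \<subseteq> U \<and> card A = m \<and> j \<in> A. f A)"
proof -
  let ?F = "{A. A \<subseteq> U \<and> card A = m}"
  have finF: "finite ?F"
    using U by (auto intro: finite_subset[of _ "Pow U"])
  have "real m * (\<Sum>A\<in>?F. f A) = (\<Sum>A\<in>?F. \<Sum>j\<in>{j\<in>U. j \<in> A}. f A)"
    unfolding sum_distrib_left
  proof (rule sum.cong[OF refl])
    fix A assume "A \<in> ?F"
    then have "{j\<in>U. j \<in> A} = A" "card A = m"
      by auto
    then show "real m * f A = (\<Sum>j\<in>{j\<in>U. j \<in> A}. f A)"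
      by simp
  qed
  also have "\<dots> = (\<Sum>j\<in>U. \<Sum>A\<in>{A\<in>?F. j \<in> A}. f A)"
    by (rule sum.swap_restrict[OF finF U])
  finally show ?thesis
    by (simp add: conj_assoc)
qed

lemma sum_subsets_remove_point:
  fixes f :: "'a set \<Rightarrow> real"
  assumes U: "finite U" and m: "1 \<le> m" "m \<le> card U"
  shows "real (card U - m + 1) * (\<Sum>B | B \<subseteq> U \<and> card B = m - 1. f B)
           = (\<Sum>j\<in>U. \<Sum>A | A \<subseteq> U \<and> card A = m \<and> j \<in> A. f (A - {j}))"
proof -
  let ?F = "{B. B \<subseteq> U \<and> card B = m - 1}"
  have finF: "finite ?F"
    using U by (auto intro: finite_subset[of _ "Pow U"])
  have "real (card U - m + 1) * (\<Sum>B\<in>?F. f B) = (\<Sum>B\<in>?F. \<Sum>j\<in>{j\<in>U. j \<notin> B}. f B)"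
    unfolding sum_distrib_left
  proof (rule sum.cong[OF refl])
    fix B assume B: "B \<in> ?F"
    then have "{j\<in>U. j \<notin> B} = U - B"
      by auto
    moreover have "card (U - B) = card U - m + 1"
      using B U m by (auto simp: card_Diff_subset finite_subset)
    ultimately show "real (card U - m + 1) * f B = (\<Sum>j\<in>{j\<in>U. j \<notin> B}. f B)"
      by simp
  qed
  also have "\<dots> = (\<Sum>j\<in>U. \<Sum>B\<in>{B\<in>?F. j \<notin> B}. f B)"
    by (rule sum.swap_restrict[OF finF U])
  also have "\<dots> = (\<Sum>j\<in>U. \<Sum>A | A \<subseteq> U \<and> card A = m \<and> j \<in> A. f (A - {j}))"
  proof (rule sum.cong[OF refl])
    fix j assume j: "j \<in> U"
    have "bij_betw (\<lambda>A. A - {j}) {A. A \<subseteq> U \<and> card A = m \<and> j \<in> A} {B\<in>?F. j \<notin> B}"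
    proof (rule bij_betw_byWitness[where f' = "insert j"])
      show "(\<lambda>A. A - {j}) ` {A. A \<subseteq> U \<and> card A = m \<and> j \<in> A} \<subseteq> {B\<in>?F. j \<notin> B}"
        using U by (auto intro: finite_subset)
      show "insert j ` {B\<in>?F. j \<notin> B} \<subseteq> {A. A \<subseteq> U \<and> card A = m \<and> j \<in> A}"
        using U j m by (auto simp: finite_subset)
    qed auto
    then show "(\<Sum>B\<in>{B\<in>?F. j \<notin> B}. f B) = (\<Sum>A | A \<subseteq> U \<and> card A = m \<and> j \<in> A. f (A - {j}))"
      by (rule sum.reindex_bij_betw[symmetric])
  qed
  finally show ?thesis .
qed

lemma info_coeff_eq_sum_rank_drops:
  assumes "t < n"
  shows "info_coeff n k g t = (\<Sum>j<n. \<Sum>A | A \<subseteq> {..<n} \<and> card A = n - t \<and> j \<in> A.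
           real (col_rank k g A) - real (col_rank k g (A - {j})))"
proof -
  have "real (n - t) * info_fun n k g (n - t)
      = (\<Sum>j<n. \<Sum>A | A \<subseteq> {..<n} \<and> card A = n - t \<and> j \<in> A. real (col_rank k g A))"
    unfolding info_fun_def by (rule sum_subsets_times_card) simp
  moreover have "real (t + 1) * info_fun n k g (n - 1 - t)
      = (\<Sum>j<n. \<Sum>A | A \<subseteq> {..<n} \<and> card A = n - t \<and> j \<in> A. real (col_rank k g (A - {j})))"
    using sum_subsets_remove_point[of "{..<n}" "n - t" "\<lambda>A. real (col_rank k g A)"] assms
    by (simp add: info_fun_def Suc_diff_Suc)
  ultimately show ?thesis
    by (simp add: info_coeff_def sum_subtractf)
qed

lemma info_coeff_nonneg: "t < n \<Longrightarrow> 0 \<le> info_coeff n k g t"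
  unfolding info_coeff_eq_sum_rank_drops
  by (intro sum_nonneg) (auto intro!: col_rank_mono intro: finite_subset)

lemma bij_betw_Diff_singleton:
  assumes U: "finite U" and j: "j \<in> U"
  shows "bij_betw (\<lambda>i. U - {i}) (U - {j}) {A. A \<subseteq> U \<and> card A = card U - 1 \<and> j \<in> A}"
proof (rule bij_betw_imageI)
  show "inj_on (\<lambda>i. U - {i}) (U - {j})"
    by (rule inj_onI) blast
  show "(\<lambda>i. U - {i}) ` (U - {j}) = {A. A \<subseteq> U \<and> card A = card U - 1 \<and> j \<in> A}"
  proof (intro equalityI subsetI)
    fix A assume "A \<in> {A. A \<subseteq> U \<and> card A = card U - 1 \<and> j \<in> A}"
    then have A: "A \<subseteq> U" "card A = card U - 1" "j \<in> A"
      by auto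
    moreover have "0 < card U"
      using U j card_gt_0_iff by blast
    ultimately have "card (U - A) = 1"
      using U by (simp add: card_Diff_subset finite_subset)
    then obtain i where "U - A = {i}"
      by (rule card_1_singletonE)
    then have "A = U - {i}" "i \<in> U - {j}"
      using A by blast+
    then show "A \<in> (\<lambda>i. U - {i}) ` (U - {j})"
      by blast
  qed (use U j in auto)
qed

lemma info_coeff_1_eq:
  assumes "2 \<le> n"
  shows "info_coeff n k g 1 = (\<Sum>j<n. \<Sum>i\<in>{..<n} - {j}.
           real (col_rank k g ({..<n} - {i})) - real (col_rank k g ({..<n} - {i} - {j})))"
proof -
  have "info_coeff n k g 1 = (\<Sum>j<n. \<Sum>A | A \<subseteq> {..<n} \<and> card A = n - 1 \<and> j \<in> A.
           real (col_rank k g A) - real (col_rank k g (A - {j})))"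
    using info_coeff_eq_sum_rank_drops[of 1 n] assms by simp
  also have "\<dots> = (\<Sum>j<n. \<Sum>i\<in>{..<n} - {j}.
           real (col_rank k g ({..<n} - {i})) - real (col_rank k g ({..<n} - {i} - {j})))"
    by (intro sum.cong refl)
      (simp add: sum.reindex_bij_betw[OF bij_betw_Diff_singleton[of "{..<n}", simplified], symmetric])
  finally show ?thesis .
qed

lemma weight2_codeword_support:
  assumes c: "c \<in> code n k g" "hweight n c = 2" and ij: "i \<noteq> j" "c i" "c j"
  shows "c x \<longleftrightarrow> x = i \<or> x = j"
proof -
  have "{i, j} \<subseteq> {x. x < n \<and> c x}"
    using ij code_support_less[OF c(1)] by auto
  then have "{i, j} = {x. x < n \<and> c x}"
    using c(2) ij(1) by (intro card_subset_eq) (auto simp: hweight_def)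
  then show ?thesis
    using code_support_less[OF c(1)] by blast
qed

lemma card_weight2_pairs:
  "card (\<Union>c\<in>{c\<in>code n k g. hweight n c = 2}. {(j, i). i \<noteq> j \<and> c i \<and> c j}) = 2 * B2 n k g"
proof -
  let ?W = "{c\<in>code n k g. hweight n c = 2}"
  let ?E = "\<lambda>c. {(j, i). i \<noteq> j \<and> c i \<and> c j}"
  have finW: "finite ?W"
    using finite_code[of n k g] by simp
  have cardE: "card (?E c) = 2" if "c \<in> code n k g" "hweight n c = 2" for c
  proof -
    have "card {x. x < n \<and> c x} = 2"
      using that(2) by (simp add: hweight_def)
    then obtain a b where ab: "{x. x < n \<and> c x} = {a, b}" "a \<noteq> b"
      by (meson card_2_iff)
    have "c x \<longleftrightarrow> x \<in> {x. x < n \<and> c x}" for x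
      using code_support_less[OF that(1)] by blast
    then have "c x \<longleftrightarrow> x = a \<or> x = b" for x
      unfolding ab(1) by simp
    then have "?E c = {(a, b), (b, a)}"
      using ab(2) by auto
    then show ?thesis
      using ab(2) by simp
  qed
  have disjoint: "?E c \<inter> ?E c' = {}" if c: "c \<in> ?W" "c' \<in> ?W" "c \<noteq> c'" for c c'
  proof (rule equals0I, clarify)
    fix j i assume "i \<noteq> j" "c i" "c j" "c' i" "c' j"
    then have "c x = c' x" for x
      using c weight2_codeword_support[of c n k g i j x] weight2_codeword_support[of c' n k g i j x]
      by simp
    then show False
      using c(3) by blast
  qed
  have "card (\<Union>c\<in>?W. ?E c) = (\<Sum>c\<in>?W. card (?E c))"
    using finW cardE disjoint by (intro card_UN_disjoint) (auto intro: card_ge_0_finite)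
  also have "\<dots> = 2 * card ?W"
    using cardE by simp
  finally show ?thesis
    by (simp add: B2_def)
qed

lemma two_B2_le_info_coeff_1:
  assumes n: "2 \<le> n"
  shows "2 * real (B2 n k g) \<le> info_coeff n k g 1"
proof -
  define d where "d = (\<lambda>(j, i). real (col_rank k g ({..<n} - {i})) - real (col_rank k g ({..<n} - {i} - {j})))"
  define P where "P = (\<Union>c\<in>{c\<in>code n k g. hweight n c = 2}. {(j, i). i \<noteq> j \<and> c i \<and> c j})"
  define Q where "Q = (SIGMA j:{..<n}. {..<n} - {j})"
  have "P \<subseteq> Q"
    unfolding P_def Q_def using code_support_less by blast
  have d_ge_1: "1 \<le> d p" if "p \<in> P" for p
  proof -
    obtain c j i where c: "c \<in> code n k g" "hweight n c = 2" "i \<noteq> j" "c i" "c j" and p: "p = (j, i)"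
      using \<open>p \<in> P\<close> unfolding P_def by blast
    obtain S where S: "S \<subseteq> {..<k}" "c = codeword n g S"
      using c(1) unfolding code_def by blast
    have "col_rank k g ({..<n} - {i} - {j}) < col_rank k g ({..<n} - {i})"
    proof (rule col_rank_Diff_weight2_less[OF S(1)])
      show "codeword n g S x \<longleftrightarrow> x = i \<or> x = j" for x
        using weight2_codeword_support[OF c] S(2) by simp
      show "j < n"
        using code_support_less[OF c(1) c(5)] .
    qed (use c in blast)
    then show ?thesis
      unfolding d_def p by simp
  qed
  have d_nonneg: "0 \<le> d p" if "p \<in> Q - P" for p
    using that unfolding d_def Q_def by (auto intro!: col_rank_mono)
  have "2 * real (B2 n k g) = (\<Sum>p\<in>P. 1)"
    using card_weight2_pairs[of n k g] unfolding P_def by simp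
  also have "\<dots> \<le> (\<Sum>p\<in>P. d p)"
    using d_ge_1 by (rule sum_mono)
  also have "\<dots> \<le> (\<Sum>p\<in>Q. d p)"
    using \<open>P \<subseteq> Q\<close> d_nonneg by (intro sum_mono2) (auto simp: Q_def)
  also have "\<dots> = info_coeff n k g 1"
    unfolding info_coeff_1_eq[OF n] Q_def d_def by (simp add: sum.Sigma)
  finally show ?thesis .
qed

lemma B2_eq_0_if_length_less_2: "n < 2 \<Longrightarrow> B2 n k g = 0"
proof -
  assume "n < 2"
  moreover have "hweight n c \<le> n" for c
    unfolding hweight_def by (rule order_trans[OF card_mono[of "{..<n}"]]) auto
  ultimately have "{c \<in> code n k g. hweight n c = 2} = {}"
    by (metis (mono_tags, lifting) empty_Collect_eq leD)
  then show ?thesis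
    unfolding B2_def by (metis card.empty)
qed

lemma B2_pos_if_min_dist_2:
  assumes g: "is_generator n k g" and k: "0 < k" and d: "min_dist n k g = 2"
  shows "0 < B2 n k g"
proof -
  let ?D = "{hweight n c | c. c \<in> code n k g \<and> c \<noteq> (\<lambda>_. False)}"
  have fin: "finite ?D"
    using finite_code[of n k g] by simp
  obtain j where j: "j < n" "g 0 j"
    using is_generator_row_nonzero[OF g k] .
  have "{0} \<subseteq> {..<k}"
    using k by simp
  then have "codeword n g {0} \<in> code n k g"
    unfolding code_def by blast
  moreover have "codeword n g {0} \<noteq> (\<lambda>_. False)"
    using j by (metis codeword_def gf2_sum_singleton)
  ultimately have "hweight n (codeword n g {0}) \<in> ?D"
    by blast
  then have "?D \<noteq> {}"
    by blast
  then have "2 \<in> ?D"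
    using Min_in[OF fin] d unfolding min_dist_def by metis
  then have "{c \<in> code n k g. hweight n c = 2} \<noteq> {}"
    by auto
  then show ?thesis
    unfolding B2_def using finite_code[of n k g] by (simp add: card_gt_0_iff)
qed

lemma two_B2_le_info_sum:
  assumes p: "0 \<le> p" "p \<le> 1" and "n \<le> N"
  shows "2 * real (B2 n k g) * (p * (1 - p) ^ N)
           \<le> (\<Sum>t<n. p ^ t * (1 - p) ^ (n - 1 - t) * info_coeff n k g t)"
proof (cases "2 \<le> n")
  case True
  have "2 * real (B2 n k g) * (p * (1 - p) ^ N) \<le> info_coeff n k g 1 * (p * (1 - p) ^ (n - 2))"
    using two_B2_le_info_coeff_1[OF True] info_coeff_nonneg[of 1 n] True p \<open>n \<le> N\<close>
    by (intro mult_mono mult_left_mono power_decreasing) auto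
  also have "\<dots> = p ^ 1 * (1 - p) ^ (n - 1 - 1) * info_coeff n k g 1"
    by (simp add: numeral_2_eq_2)
  also have "\<dots> \<le> (\<Sum>t<n. p ^ t * (1 - p) ^ (n - 1 - t) * info_coeff n k g t)"
    using True p info_coeff_nonneg by (intro member_le_sum) auto
  finally show ?thesis .
next
  case False
  have "0 \<le> (\<Sum>t<n. p ^ t * (1 - p) ^ (n - 1 - t) * info_coeff n k g t)"
    using p by (intro sum_nonneg mult_nonneg_nonneg info_coeff_nonneg) auto
  then show ?thesis
    using False by (simp add: B2_eq_0_if_length_less_2)
qed

lemma evolution_poly_ge:
  assumes "finite H" "\<forall>h\<in>H. 0 \<le> Lam h" "\<forall>h\<in>H. nn h \<le> N" "0 \<le> p" "p \<le> 1"
  shows "2 * (\<Sum>h\<in>H. Lam h * real (B2 (nn h) k (gen h))) * (p * (1 - p) ^ N)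
           \<le> evolution_poly H Lam nn gen k p"
proof -
  have "2 * (\<Sum>h\<in>H. Lam h * real (B2 (nn h) k (gen h))) * (p * (1 - p) ^ N)
      = (\<Sum>h\<in>H. Lam h * (2 * real (B2 (nn h) k (gen h)) * (p * (1 - p) ^ N)))"
    by (simp add: sum_distrib_left sum_distrib_right mult_ac)
  also have "\<dots> \<le> evolution_poly H Lam nn gen k p"
    unfolding evolution_poly_def using assms
    by (intro sum_mono mult_left_mono two_B2_le_info_sum) auto
  finally show ?thesis .
qed

lemma avg_len_pos:
  assumes "\<forall>h\<in>H. 0 \<le> Lam h" "sum Lam H = 1" "\<forall>h\<in>H. 0 < nn h"
  shows "0 < avg_len H Lam nn"
proof -
  have "1 = (\<Sum>h\<in>H. Lam h * 1)"
    using assms(2) by simp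
  also have "\<dots> \<le> avg_len H Lam nn"
    unfolding avg_len_def using assms(1,3)
    by (intro sum_mono mult_left_mono) (auto simp: Suc_le_eq)
  finally show ?thesis
    by simp
qed

lemma pseq_in_unit_interval:
  assumes G: "0 < G" and k: "0 < k" and avg: "0 < avg_len H Lam nn"
    and poly: "\<And>p. 0 < p \<Longrightarrow> p < 1 \<Longrightarrow> 0 < evolution_poly H Lam nn gen k p"
  shows "0 < pseq H Lam nn gen k G l \<and> pseq H Lam nn gen k G l < 1"
proof (induction l)
  case 0
  have "0 < G / rate H Lam nn k"
    unfolding rate_def using G k avg by simp
  then show ?case
    by simp
next
  case (Suc l)
  then have "0 < G / real k * evolution_poly H Lam nn gen k (pseq H Lam nn gen k G l)"
    using G k poly by simp
  then show ?case
    unfolding pseq_Suc by simp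
qed

lemma pseq_G_zero: "pseq H Lam nn gen k 0 l = 0"
  by (induction l) (simp_all add: Let_def)

lemma not_tendsto_zero_if_increasing_near_zero:
  fixes x :: "nat \<Rightarrow> real"
  assumes pos: "\<And>l. 0 < x l" and incr: "\<And>l. x l < \<delta> \<Longrightarrow> x l < x (Suc l)" and "0 < \<delta>"
  shows "\<not> x \<longlonglongrightarrow> 0"
proof
  assume lim: "x \<longlonglongrightarrow> 0"
  then obtain L where L: "\<And>l. L \<le> l \<Longrightarrow> x l < \<delta>"
    using order_tendstoD(2)[OF lim \<open>0 < \<delta>\<close>] unfolding eventually_sequentially by blast
  have "x L \<le> x l" if "L \<le> l" for l
    using that
  proof (induction l rule: dec_induct)
    case (step m)
    then show ?case
      using incr[OF L[OF step.hyps(1)]] by simp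
  qed simp
  then have "x L \<le> 0"
    using LIMSEQ_le_const[OF lim] by blast
  then show False
    using pos[of L] by simp
qed

lemma less_one_minus_exp_near_zero:
  fixes a p :: real
  assumes a: "1 < a" and p: "0 < p" "p < (a - 1) / (a * (real N + 1))"
  shows "p < 1 - exp (- (a * (p * (1 - p) ^ N)))"
proof -
  define y where "y = a * (p * (1 - p) ^ N)"
  have "a * 1 \<le> a * (real N + 1)"
    using a by (intro mult_left_mono) auto
  then have c: "0 < a * (real N + 1)" "a - 1 < a * (real N + 1)"
    using a by linarith+
  have pc: "p * (a * (real N + 1)) < a - 1"
    using p(2) c(1) by (simp add: pos_less_divide_eq)
  have p1: "p < 1"
    using pc c mult_less_cancel_right2[of p "a * (real N + 1)"] by linarith
  have y0: "0 \<le> y"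
    unfolding y_def using a p p1 by simp
  have "p * (p * (a * (real N + 1))) < p * (a - 1)"
    using pc p(1) by (rule mult_strict_left_mono)
  then have "p < a * p * (1 - (real N + 1) * p)"
    by (simp add: algebra_simps)
  also have "\<dots> \<le> a * p * ((1 - real N * p) * (1 - p))"
    using a p by (intro mult_left_mono) (auto simp: algebra_simps)
  also have "\<dots> \<le> y * (1 - p)"
    unfolding y_def using a p p1 Bernoulli_inequality[of "- p" N]
    by (simp add: mult.assoc mult_left_mono mult_right_mono)
  finally have "p < y * (1 - p)" .
  then have "p < y / (1 + y)"
    using y0 by (simp add: pos_less_divide_eq algebra_simps)
  also have "y / (1 + y) \<le> 1 - exp (- y)"
  proof -
    have "exp (- y) \<le> 1 / (1 + y)"
      using exp_ge_add_one_self[of y] y0 by (simp add: exp_minus divide_simps)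
    then show ?thesis
      using y0 by (simp add: divide_simps algebra_simps)
  qed
  finally show ?thesis
    unfolding y_def .
qed

lemma pseq_increasing_near_zero:
  assumes H: "finite H" and k: "0 < k" and Lam: "\<forall>h\<in>H. 0 \<le> Lam h" "sum Lam H = 1"
    and gen: "\<forall>h\<in>H. is_generator (nn h) k (gen h)"
    and G: "real k < G * (2 * (\<Sum>h\<in>H. Lam h * real (B2 (nn h) k (gen h))))"
  obtains \<delta> where "0 < \<delta>" "\<And>l. 0 < pseq H Lam nn gen k G l"
    "\<And>l. pseq H Lam nn gen k G l < \<delta> \<Longrightarrow> pseq H Lam nn gen k G l < pseq H Lam nn gen k G (Suc l)"
proof -
  define B where "B = (\<Sum>h\<in>H. Lam h * real (B2 (nn h) k (gen h)))"
  define N where "N = (\<Sum>h\<in>H. nn h)"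
  define a where "a = G / real k * (2 * B)"
  let ?p = "pseq H Lam nn gen k G"
  have "0 \<le> B"
    unfolding B_def using Lam by (intro sum_nonneg) simp
  moreover have "0 < G * (2 * B)"
    using G of_nat_0_le_iff[of k] unfolding B_def by linarith
  ultimately have Bpos: "0 < B" and Gpos: "0 < G"
    by (auto simp: zero_less_mult_iff)
  have a: "1 < a"
    using G k by (simp add: a_def B_def field_simps)
  have poly_ge: "2 * B * (p * (1 - p) ^ N) \<le> evolution_poly H Lam nn gen k p"
    if "0 \<le> p" "p \<le> 1" for p
    unfolding B_def using H Lam that
    by (intro evolution_poly_ge) (auto simp: N_def intro: member_le_sum)
  have "0 < nn h" if "h \<in> H" for h
    using is_generator_row_nonzero[of "nn h" k "gen h" 0] gen that k by (metis gr_zeroI not_less0)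
  then have "0 < avg_len H Lam nn"
    using Lam by (intro avg_len_pos) auto
  moreover have "0 < evolution_poly H Lam nn gen k p" if "0 < p" "p < 1" for p
    using poly_ge[of p] Bpos that by (smt (verit) mult_pos_pos zero_less_power)
  ultimately have unit: "0 < ?p l \<and> ?p l < 1" for l
    using Gpos k by (intro pseq_in_unit_interval) auto
  have incr: "?p l < ?p (Suc l)" if "?p l < (a - 1) / (a * (real N + 1))" for l
  proof -
    have "a * (?p l * (1 - ?p l) ^ N) = G / real k * (2 * B * (?p l * (1 - ?p l) ^ N))"
      unfolding a_def by (simp add: mult_ac)
    also have "\<dots> \<le> G / real k * evolution_poly H Lam nn gen k (?p l)"
      using poly_ge[of "?p l"] unit[of l] Gpos by (intro mult_left_mono) auto
    finally have exponent:
      "- (G / real k) * evolution_poly H Lam nn gen k (?p l) \<le> - (a * (?p l * (1 - ?p l) ^ N))"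
      by simp
    have "?p l < 1 - exp (- (a * (?p l * (1 - ?p l) ^ N)))"
      using less_one_minus_exp_near_zero[OF a] unit that by blast
    also have "\<dots> \<le> 1 - exp (- (G / real k) * evolution_poly H Lam nn gen k (?p l))"
      using exponent by simp
    finally show ?thesis
      unfolding pseq_Suc .
  qed
  show ?thesis
  proof (rule that[OF _ _ incr])
    show "0 < (a - 1) / (a * (real N + 1))"
      using a by simp
    show "0 < ?p l" for l
      using unit by blast
  qed
qed

lemma le_if_pseq_tendsto_zero:
  assumes H: "finite H" and k: "0 < k" and Lam: "\<forall>h\<in>H. 0 \<le> Lam h" "sum Lam H = 1"
    and gen: "\<forall>h\<in>H. is_generator (nn h) k (gen h)"
    and B: "0 < (\<Sum>h\<in>H. Lam h * real (B2 (nn h) k (gen h)))"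
    and lim: "pseq H Lam nn gen k G \<longlonglongrightarrow> 0"
  shows "G \<le> real k / (2 * (\<Sum>h\<in>H. Lam h * real (B2 (nn h) k (gen h))))"
proof (rule ccontr)
  define S where "S = (\<Sum>h\<in>H. Lam h * real (B2 (nn h) k (gen h)))"
  assume "\<not> ?thesis"
  then have "real k / (2 * S) < G"
    unfolding S_def by simp
  moreover have "0 < S"
    using B unfolding S_def .
  ultimately have "real k < G * (2 * S)"
    by (simp add: pos_divide_less_eq)
  then obtain \<delta> where "0 < \<delta>" "\<And>l. 0 < pseq H Lam nn gen k G l"
    "\<And>l. pseq H Lam nn gen k G l < \<delta> \<Longrightarrow> pseq H Lam nn gen k G l < pseq H Lam nn gen k G (Suc l)"
    using pseq_increasing_near_zero[OF H k Lam gen] unfolding S_def by blast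
  then show False
    using not_tendsto_zero_if_increasing_near_zero lim by blast
qed

lemma threshold_le:
  assumes "finite H" "0 < k" "\<forall>h\<in>H. 0 \<le> Lam h" "sum Lam H = 1"
    and "\<forall>h\<in>H. is_generator (nn h) k (gen h)"
    and "0 < (\<Sum>h\<in>H. Lam h * real (B2 (nn h) k (gen h)))"
  shows "threshold H Lam nn gen k \<le> real k / (2 * (\<Sum>h\<in>H. Lam h * real (B2 (nn h) k (gen h))))"
  unfolding threshold_def
proof (rule cSup_least)
  have "pseq H Lam nn gen k 0 = (\<lambda>_. 0)"
    using pseq_G_zero by blast
  then show "{G. 0 \<le> G \<and> pseq H Lam nn gen k G \<longlonglongrightarrow> 0} \<noteq> {}"
    by force
qed (use assms le_if_pseq_tendsto_zero in blast)

lemma threshold_le_weight2: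
  assumes H: "finite H" and k: "0 < k" and Lam: "\<forall>h\<in>H. 0 \<le> Lam h" "sum Lam H = 1"
    and gen: "\<forall>h\<in>H. is_generator (nn h) k (gen h)"
    and r: "Min {min_dist (nn h) k (gen h) | h. h \<in> H \<and> Lam h > 0} = 2"
  shows "threshold H Lam nn gen k
           \<le> real k / (2 * (\<Sum>h | h \<in> H \<and> min_dist (nn h) k (gen h) = 2.
                               Lam h * real (B2 (nn h) k (gen h))))"
proof -
  define w where "w = (\<lambda>h. Lam h * real (B2 (nn h) k (gen h)))"
  let ?H2 = "{h. h \<in> H \<and> min_dist (nn h) k (gen h) = 2}"
  have "\<exists>h\<in>H. 0 < Lam h"
  proof (rule ccontr)
    assume "\<not> (\<exists>h\<in>H. 0 < Lam h)"
    then have "sum Lam H \<le> 0"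
      by (intro sum_nonpos) (simp add: not_less)
    then show False
      using Lam(2) by simp
  qed
  then have "{min_dist (nn h) k (gen h) | h. h \<in> H \<and> Lam h > 0} \<noteq> {}"
    by blast
  then obtain h0 where h0: "h0 \<in> ?H2" "0 < Lam h0"
    using Min_in[of "{min_dist (nn h) k (gen h) | h. h \<in> H \<and> Lam h > 0}"] r H by auto
  have w_nonneg: "0 \<le> w h" if "h \<in> H" for h
    using Lam that by (simp add: w_def)
  have "0 < w h0"
    using h0 B2_pos_if_min_dist_2[of "nn h0" k "gen h0"] gen k by (simp add: w_def)
  also have "\<dots> \<le> sum w ?H2"
    using H w_nonneg h0(1) by (intro member_le_sum) auto
  finally have pos: "0 < sum w ?H2" .
  have "sum w ?H2 \<le> sum w H"
    using H w_nonneg by (intro sum_mono2) auto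
  then have "real k / (2 * sum w H) \<le> real k / (2 * sum w ?H2)"
    using pos by (intro divide_left_mono) auto
  moreover have "0 < sum w H"
    using pos \<open>sum w ?H2 \<le> sum w H\<close> by linarith
  then have "threshold H Lam nn gen k \<le> real k / (2 * sum w H)"
    unfolding w_def by (rule threshold_le[OF H k Lam gen])
  ultimately show ?thesis
    unfolding w_def by linarith
qed

abbreviation repetition_gen :: "nat \<Rightarrow> nat \<Rightarrow> bool" where
  "repetition_gen \<equiv> \<lambda>i j. True"

lemma code_repetition_gen: "code n 1 repetition_gen = {\<lambda>_. False, \<lambda>j. j < n}"
proof -
  have "{S. S \<subseteq> {..<1::nat}} = {{}, {0}}"
    by auto
  then have "code n 1 repetition_gen = codeword n repetition_gen ` {{}, {0}}"
    unfolding code_def by blast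
  then show ?thesis
    by (simp add: codeword_def gf2_sum_def)
qed

lemma min_dist_repetition_gen: "0 < n \<Longrightarrow> min_dist n 1 repetition_gen = n"
proof -
  assume "0 < n"
  then have "(\<lambda>j. j < n) \<noteq> (\<lambda>_. False)"
    by (auto simp: fun_eq_iff)
  then have "{hweight n c | c. c \<in> code n 1 repetition_gen \<and> c \<noteq> (\<lambda>_. False)} = {n}"
    unfolding code_repetition_gen by (auto simp: hweight_def intro!: exI[of _ "\<lambda>j. j < n"])
  then show ?thesis
    by (simp add: min_dist_def)
qed

lemma B2_repetition_gen_2: "B2 2 1 repetition_gen = 1"
proof -
  have "{c \<in> code 2 1 repetition_gen. hweight 2 c = 2} = {\<lambda>j. j < 2}"
    unfolding code_repetition_gen by (auto simp: hweight_def)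
  then show ?thesis
    by (simp add: B2_def)
qed

lemma is_generator_repetition_gen: "0 < n \<Longrightarrow> is_generator n 1 repetition_gen"
  unfolding is_generator_def by (auto simp: subset_singleton_iff lessThan_Suc)

lemma threshold_IRSA_le:
  assumes "2 \<le> theta" "\<forall>h\<in>{2..theta}. 0 \<le> Lam h" "sum Lam {2..theta} = 1"
    and "Min {h | h. h \<in> {2..theta} \<and> Lam h > 0} = 2"
  shows "threshold {2..theta} Lam (\<lambda>h. h) (\<lambda>h. repetition_gen) 1 \<le> 1 / (2 * Lam 2)"
proof -
  have md: "min_dist h 1 repetition_gen = h" if "h \<in> {2..theta}" for h
    using that min_dist_repetition_gen[of h] by simp
  then have "{min_dist h 1 repetition_gen | h. h \<in> {2..theta} \<and> Lam h > 0} = {h | h. h \<in> {2..theta} \<and> Lam h > 0}"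
    by force
  moreover have "{h. h \<in> {2..theta} \<and> min_dist h 1 repetition_gen = 2} = {2}"
    using md assms(1) by auto
  moreover have "\<forall>h\<in>{2..theta}. is_generator h 1 repetition_gen"
    using is_generator_repetition_gen by simp
  ultimately show ?thesis
    using threshold_le_weight2[of "{2..theta}" 1 Lam "\<lambda>h. h" "\<lambda>h. repetition_gen"] assms B2_repetition_gen_2
    by simp
qed

theorem mainTheorem6:
  shows
  "(\<forall>(H::nat set) (Lam::nat \<Rightarrow> real) (nn::nat \<Rightarrow> nat) (gen::nat \<Rightarrow> nat \<Rightarrow> nat \<Rightarrow> bool) (k::nat).
      finite H \<and> H \<noteq> {} \<and> k > 0
      \<and> (\<forall>h\<in>H. Lam h \<ge> 0) \<and> sum Lam H = 1
      \<and> (\<forall>h\<in>H. is_generator (nn h) k (gen h) \<and> no_idle (nn h) k (gen h)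
                 \<and> min_dist (nn h) k (gen h) \<ge> 2)
      \<and> Min {min_dist (nn h) k (gen h) | h. h \<in> H \<and> Lam h > 0} = 2
      \<longrightarrow> threshold H Lam nn gen k
            \<le> real k / (2 * (\<Sum>h | h \<in> H \<and> min_dist (nn h) k (gen h) = 2.
                                  Lam h * real (B2 (nn h) k (gen h)))))
   \<and>
   (\<forall>(theta::nat) (Lam::nat \<Rightarrow> real).
      theta \<ge> 2 \<and> (\<forall>h\<in>{2..theta}. Lam h \<ge> 0) \<and> sum Lam {2..theta} = 1
      \<and> Min {h | h. h \<in> {2..theta} \<and> Lam h > 0} = 2
      \<longrightarrow> threshold {2..theta} Lam (\<lambda>h. h) (\<lambda>h i j. True) 1 \<le> 1 / (2 * Lam 2))"
  using threshold_le_weight2 threshold_IRSA_le by blast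

end
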